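(* For any prime $p\ge5$, any integer $\alpha\ge0$ and any integer $n\ge0$, \[ b_2\!\left(p^{2\alpha+1}n+\frac{(24j+1)p^{2\alpha}-1}{24}\right)\equiv 0 \pmod 2 \] for every integer $j$ with $0\le j\le p-1$ and $\left(\frac{24j+1}{p}\right)=-1$.
   Context: For a positive integer $\ell$, $b_\ell(n)$ denotes the number of partitions of $n$ having no part divisible by $\ell$. $\left(\frac{a}{p}\right)$ is the Legendre symbol. *)

theory Defs
  imports "HOL-Number_Theory.Number_Theory" "HOL-Library.Multiset"
begin

definition b :: "nat \<Rightarrow> nat \<Rightarrow> nat" where
  "b l n = card {M :: nat multiset. (\<forall>x\<in>#M. 0 < x \<and> \<not> l dvd x) \<and> sum_mset M = n}"

end

theory Submission
  imports Defs
begin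

text \<open>By Glaisher's bijection, \<open>b\<^sub>2(N)\<close> is the number of partitions of \<open>N\<close> into distinct
  parts. Franklin's involution on these partitions has no fixed point unless \<open>N\<close> is a
  generalised pentagonal number \<open>k(3k \<plusminus> 1)/2\<close>, that is, unless \<open>24N + 1\<close> is a square; so
  \<open>b\<^sub>2(N)\<close> is even otherwise. For the index \<open>N\<close> of the theorem,
  \<open>24N + 1 = p\<^sup>2\<^sup>\<alpha>(24pn + 24j + 1)\<close>, and if this were a square then so would be
  \<open>24pn + 24j + 1 \<equiv> 24j + 1 (mod p)\<close>, contradicting that \<open>24j + 1\<close> is a non-residue.\<close>

section \<open>Glaisher's bijection\<close>

lemma bit_nat_imp_power_le: "bit (c::nat) t \<Longrightarrow> 2 ^ t \<le> c"
  by (rule ccontr) (simp add: bit_iff_odd)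

lemma bit_nat_imp_less: "bit (c::nat) t \<Longrightarrow> t < c"
  using bit_nat_imp_power_le less_exp less_le_trans by blast

lemma sum_bits_nat: "(\<Sum>t | bit c t. 2 ^ t) = (c::nat)"
proof -
  have "c = take_bit c c" by (simp add: take_bit_nat_eq_self less_exp)
  also have "\<dots> = (\<Sum>t<c. 2 ^ t * of_bool (bit c t))"
    by (simp add: take_bit_sum push_bit_eq_mult atLeast0LessThan)
  also have "\<dots> = (\<Sum>t | bit c t. 2 ^ t)"
    by (rule sum.mono_neutral_cong_right) (auto dest: bit_nat_imp_less)
  finally show ?thesis ..
qed

lemma bit_sum_power2_iff:
  assumes "finite T" shows "bit (\<Sum>t\<in>T. 2 ^ t :: nat) n \<longleftrightarrow> n \<in> T"
proof -
  obtain N where N: "T \<subseteq> {..<N}" using assms finite_nat_iff_bounded by auto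
  let ?bs = "map (\<lambda>t. t \<in> T) [0..<N]"
  have "(\<Sum>t\<in>T. 2 ^ t :: nat) = (\<Sum>t<N. of_bool (t \<in> T) * 2 ^ t)"
    using N by (intro sum.mono_neutral_cong_left) auto
  also have "\<dots> = horner_sum of_bool 2 ?bs"
    by (simp add: horner_sum_eq_sum atLeast0LessThan)
  finally show ?thesis using N by (auto simp: bit_horner_sum_bit_iff)
qed

definition odd_part :: "nat \<Rightarrow> nat" where
  "odd_part d = d div 2 ^ multiplicity 2 d"

lemma odd_part_times_power: "odd_part d * 2 ^ multiplicity 2 d = d"
  unfolding odd_part_def using multiplicity_dvd[of 2 d] by auto

lemma odd_odd_part: "0 < d \<Longrightarrow> odd (odd_part d)"
  unfolding odd_part_def using multiplicity_decompose[of d 2] by auto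

lemma odd_part_pos: "0 < d \<Longrightarrow> 0 < odd_part d"
  using odd_odd_part[of d] by (auto intro: gr0I)

lemma
  assumes "odd i"
  shows multiplicity_odd_times_power: "multiplicity 2 (i * 2 ^ t) = t"
    and odd_part_odd_times_power: "odd_part (i * 2 ^ t) = i"
proof -
  show *: "multiplicity 2 (i * 2 ^ t) = t"
    by (rule multiplicity_decomposeI[of _ _ _ i]) (use assms in auto)
  show "odd_part (i * 2 ^ t) = i" unfolding odd_part_def * using assms by auto
qed

lemma odd_part_multiplicity_eqI:
  assumes "odd_part d = odd_part e" and "multiplicity 2 d = multiplicity 2 e"
  shows "d = e"
  by (metis assms odd_part_times_power)

definition odd_partitions :: "nat \<Rightarrow> nat multiset set" where
  "odd_partitions N = {M. (\<forall>x\<in>#M. 0 < x \<and> odd x) \<and> sum_mset M = N}"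

definition distinct_partitions :: "nat \<Rightarrow> nat set set" where
  "distinct_partitions N = {S. finite S \<and> 0 \<notin> S \<and> \<Sum>S = N}"

text \<open>A distinct part \<open>i * 2 ^ t\<close> with \<open>i\<close> odd is split into \<open>2 ^ t\<close> copies
  of \<open>i\<close>; conversely, the binary expansion of the multiplicity of an odd part \<open>i\<close> tells which
  parts \<open>i * 2 ^ t\<close> to merge it into.\<close>

definition glaisher_split :: "nat set \<Rightarrow> nat multiset" where
  "glaisher_split S = (\<Sum>d\<in>S. replicate_mset (2 ^ multiplicity 2 d) (odd_part d))"

definition glaisher_merge :: "nat multiset \<Rightarrow> nat set" where
  "glaisher_merge M = {d. 0 < d \<and> bit (count M (odd_part d)) (multiplicity 2 d)}"

lemma count_glaisher_split:
  "finite S \<Longrightarrow>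
    count (glaisher_split S) i = (\<Sum>d | d \<in> S \<and> odd_part d = i. 2 ^ multiplicity 2 d)"
  unfolding glaisher_split_def count_sum by (simp add: sum.inter_filter eq_commute)

lemma sum_mset_glaisher_split: "finite S \<Longrightarrow> sum_mset (glaisher_split S) = \<Sum>S"
  unfolding glaisher_split_def
  by (induction S rule: finite_induct)
    (simp_all add: odd_part_times_power[unfolded mult.commute[of "odd_part _"]])

lemma finite_glaisher_merge: "finite (glaisher_merge M)"
proof (rule finite_subset)
  show "glaisher_merge M \<subseteq> {..sum_mset M}"
  proof
    fix d assume "d \<in> glaisher_merge M"
    then have bit: "bit (count M (odd_part d)) (multiplicity 2 d)"
      unfolding glaisher_merge_def by auto
    have "d = odd_part d * 2 ^ multiplicity 2 d" by (simp add: odd_part_times_power)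
    also have "\<dots> \<le> odd_part d * count M (odd_part d)"
      using bit_nat_imp_power_le[OF bit] by simp
    also have "\<dots> \<le> sum_mset M" by (induction M) auto
    finally show "d \<in> {..sum_mset M}" by simp
  qed
qed simp

lemma glaisher_merge_split:
  assumes "finite S" and "0 \<notin> S"
  shows "glaisher_merge (glaisher_split S) = S"
proof -
  have "d \<in> glaisher_merge (glaisher_split S) \<longleftrightarrow> d \<in> S" for d
  proof -
    let ?A = "{e \<in> S. odd_part e = odd_part d}"
    have "inj_on (multiplicity 2) ?A"
      by (rule inj_onI) (simp add: odd_part_multiplicity_eqI)
    then have "count (glaisher_split S) (odd_part d) = (\<Sum>t\<in>multiplicity 2 ` ?A. 2 ^ t)"
      using assms(1) by (simp add: count_glaisher_split sum.reindex)
    then have "bit (count (glaisher_split S) (odd_part d)) (multiplicity 2 d)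
        \<longleftrightarrow> multiplicity 2 d \<in> multiplicity 2 ` ?A"
      using assms(1) by (simp add: bit_sum_power2_iff)
    also have "\<dots> \<longleftrightarrow> d \<in> S"
      by (auto simp: image_iff) (metis odd_part_multiplicity_eqI)
    finally show ?thesis
      unfolding glaisher_merge_def using assms(2) by (auto intro: gr0I)
  qed
  then show ?thesis by blast
qed

lemma glaisher_split_merge:
  assumes "\<forall>x\<in>#M. odd x"
  shows "glaisher_split (glaisher_merge M) = M"
proof (rule multiset_eqI)
  fix i
  show "count (glaisher_split (glaisher_merge M)) i = count M i"
  proof (cases "odd i")
    case True
    then have "0 < i" by (rule odd_pos)
    let ?T = "{t. bit (count M i) t}"
    have parts: "{d. d \<in> glaisher_merge M \<and> odd_part d = i} = (\<lambda>t. i * 2 ^ t) ` ?T"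
    proof (intro equalityI subsetI)
      fix d assume "d \<in> {d. d \<in> glaisher_merge M \<and> odd_part d = i}"
      then have "multiplicity 2 d \<in> ?T" and "d = i * 2 ^ multiplicity 2 d"
        unfolding glaisher_merge_def using odd_part_times_power[of d] by auto
      then show "d \<in> (\<lambda>t. i * 2 ^ t) ` ?T" by blast
    qed (use True \<open>0 < i\<close> in \<open>auto simp: glaisher_merge_def odd_part_odd_times_power
                                           multiplicity_odd_times_power\<close>)
    have "inj_on (\<lambda>t. i * 2 ^ t) ?T" by (rule inj_onI) (use \<open>0 < i\<close> in auto)
    then have "count (glaisher_split (glaisher_merge M)) i = (\<Sum>t\<in>?T. 2 ^ t)"
      unfolding count_glaisher_split[OF finite_glaisher_merge] parts
      by (simp add: sum.reindex multiplicity_odd_times_power[OF True])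
    also have "\<dots> = count M i" by (rule sum_bits_nat)
    finally show ?thesis .
  next
    case False
    then have "{d. d \<in> glaisher_merge M \<and> odd_part d = i} = {}"
      unfolding glaisher_merge_def using odd_odd_part by auto
    moreover have "count M i = 0" using assms False by (meson count_inI)
    ultimately show ?thesis
      unfolding count_glaisher_split[OF finite_glaisher_merge] by (simp only: sum.empty)
  qed
qed

lemma bij_betw_glaisher_split:
  "bij_betw glaisher_split (distinct_partitions N) (odd_partitions N)"
proof (rule bij_betw_byWitness[where f' = glaisher_merge])
  show "\<forall>S\<in>distinct_partitions N. glaisher_merge (glaisher_split S) = S"
    unfolding distinct_partitions_def using glaisher_merge_split by auto
  show "\<forall>M\<in>odd_partitions N. glaisher_split (glaisher_merge M) = M"
    unfolding odd_partitions_def using glaisher_split_merge by auto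
  show "glaisher_split ` distinct_partitions N \<subseteq> odd_partitions N"
  proof
    fix M assume "M \<in> glaisher_split ` distinct_partitions N"
    then obtain S where S: "finite S" "0 \<notin> S" "\<Sum>S = N" and M: "M = glaisher_split S"
      unfolding distinct_partitions_def by auto
    have "0 < x \<and> odd x" if "x \<in># M" for x
    proof -
      from that have "{d. d \<in> S \<and> odd_part d = x} \<noteq> {}"
        unfolding M by (metis count_glaisher_split[OF S(1)] count_eq_zero_iff sum.empty)
      then obtain d where "d \<in> S" "odd_part d = x" by blast
      moreover have "0 < d" using S(2) \<open>d \<in> S\<close> by (auto intro: gr0I)
      ultimately show ?thesis using odd_odd_part odd_part_pos by auto
    qed
    then show "M \<in> odd_partitions N"
      unfolding odd_partitions_def M using S sum_mset_glaisher_split by auto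
  qed
  show "glaisher_merge ` odd_partitions N \<subseteq> distinct_partitions N"
  proof
    fix S assume "S \<in> glaisher_merge ` odd_partitions N"
    then obtain M where M: "M \<in> odd_partitions N" and S: "S = glaisher_merge M" by auto
    have "\<Sum>S = sum_mset (glaisher_split S)"
      unfolding S by (simp add: sum_mset_glaisher_split finite_glaisher_merge)
    also have "\<dots> = N" using M glaisher_split_merge unfolding S odd_partitions_def by auto
    finally show "S \<in> distinct_partitions N"
      unfolding distinct_partitions_def using S finite_glaisher_merge glaisher_merge_def by auto
  qed
qed

section \<open>Franklin's involution\<close>

text \<open>Moving the smallest part \<open>s\<close> onto the
  slope adds 1 to the \<open>s\<close> largest parts, which on sets means deleting \<open>Max S + 1 - s\<close> and
  inserting \<open>Max S + 1\<close>; moving the slope \<open>r\<close> subtracts 1 from the \<open>r\<close> largest parts and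
  inserts the new part \<open>r\<close>. The excluded cases are \<open>S = {r..<2 * r}\<close> and
  \<open>S = {r + 1..2 * r}\<close>, where the smallest part lies on the slope and the moves break down.\<close>

definition slope :: "nat set \<Rightarrow> nat" where
  "slope S = (LEAST k. Max S - k \<notin> S)"

definition move_smallest :: "nat set \<Rightarrow> nat set" where
  "move_smallest S = insert (Max S + 1) (S - {Min S, Max S + 1 - Min S})"

definition move_slope :: "nat set \<Rightarrow> nat set" where
  "move_slope S = insert (Max S - slope S) (insert (slope S) (S - {Max S}))"

definition smallest_movable :: "nat set \<Rightarrow> bool" where
  "smallest_movable S \<longleftrightarrow> Min S \<le> slope S \<and> \<not> (Min S = slope S \<and> Max S + 1 = 2 * slope S)"

definition slope_movable :: "nat set \<Rightarrow> bool" where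
  "slope_movable S \<longleftrightarrow> slope S < Min S \<and> \<not> (Min S = slope S + 1 \<and> Max S = 2 * slope S)"

definition franklin :: "nat set \<Rightarrow> nat set" where
  "franklin S = (if S = {} then S
     else if smallest_movable S then move_smallest S
     else if slope_movable S then move_slope S
     else S)"

lemma double_sum_interval: "2 * \<Sum>{a..<a + k} + k = k * (2 * a + k :: nat)"
  by (induction k) (auto simp: algebra_simps)

lemma pentagonal_sum_interval:
  "0 < k \<Longrightarrow> 24 * \<Sum>{k..<2 * k} + 1 = (6 * k - 1 :: nat)\<^sup>2"
  "24 * \<Sum>{k + 1..<2 * k + 1} + 1 = (6 * k + 1 :: nat)\<^sup>2"
proof -
  assume "0 < k"
  then obtain j where k: "k = j + 1" using gr0_implies_Suc by auto
  define X where "X = \<Sum>{k..<2 * k}"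
  have "2 * X + k = k * (3 * k)"
    using double_sum_interval[of k k] unfolding X_def by (simp add: mult_2)
  then have "2 * X = 3 * (j * j) + 5 * j + 2" unfolding k by (simp add: algebra_simps)
  moreover have "(6 * k - 1)\<^sup>2 = 36 * (j * j) + 60 * j + 25"
    unfolding k by (simp add: power2_eq_square algebra_simps)
  ultimately show "24 * X + 1 = (6 * k - 1)\<^sup>2" by linarith
next
  define X where "X = \<Sum>{k + 1..<2 * k + 1}"
  have "2 * X + k = k * (2 * (k + 1) + k)"
    using double_sum_interval[of "k + 1" k] unfolding X_def by (simp add: mult_2 add.assoc)
  then have "2 * X = 3 * (k * k) + k" by (simp add: algebra_simps)
  moreover have "(6 * k + 1)\<^sup>2 = 36 * (k * k) + 12 * k + 1" by (simp add: power2_eq_square algebra_simps)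
  ultimately show "24 * X + 1 = (6 * k + 1)\<^sup>2" by linarith
qed

locale distinct_partition =
  fixes S :: "nat set"
  assumes finite_parts: "finite S" and nonempty: "S \<noteq> {}" and zero_notin: "0 \<notin> S"
begin

lemma Min_mem: "Min S \<in> S" and Max_mem: "Max S \<in> S"
  and Min_le_mem: "x \<in> S \<Longrightarrow> Min S \<le> x" and mem_le_Max: "x \<in> S \<Longrightarrow> x \<le> Max S"
  using finite_parts nonempty by auto

lemma Min_pos: "0 < Min S"
  using Min_mem zero_notin by (auto intro: gr0I)

lemma Max_minus_slope_notin: "Max S - slope S \<notin> S"
  unfolding slope_def by (rule LeastI[of _ "Max S"]) (simp add: zero_notin)

lemma mem_if_less_slope: "j < slope S \<Longrightarrow> Max S - j \<in> S"
  unfolding slope_def using not_less_Least by blast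

lemma slope_pos: "0 < slope S"
  using Max_minus_slope_notin Max_mem by (auto intro: gr0I)

lemma slope_le_Max: "slope S \<le> Max S"
  unfolding slope_def by (rule Least_le) (simp add: zero_notin)

lemma slope_geI: "(\<And>j. j < k \<Longrightarrow> Max S - j \<in> S) \<Longrightarrow> k \<le> slope S"
  using Max_minus_slope_notin by (meson not_le)

lemma slope_eqI:
  "(\<And>j. j < k \<Longrightarrow> Max S - j \<in> S) \<Longrightarrow> Max S - k \<notin> S \<Longrightarrow> slope S = k"
  using slope_geI unfolding slope_def by (simp add: Least_le le_antisym)

lemma Suc_Max_minus_slope_mem: "Max S + 1 - slope S \<in> S"
proof -
  have "Max S - (slope S - 1) \<in> S" using slope_pos by (intro mem_if_less_slope) simp
  moreover have "Max S - (slope S - 1) = Max S + 1 - slope S" using slope_pos slope_le_Max by arith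
  ultimately show ?thesis by simp
qed

context
  assumes movable: "smallest_movable S"
begin

lemma Min_lt_Suc_Max_minus_Min: "Min S < Max S + 1 - Min S"
  using movable Min_le_mem[OF Suc_Max_minus_slope_mem] slope_le_Max
  unfolding smallest_movable_def by linarith

lemma Suc_Max_minus_Min_mem: "Max S + 1 - Min S \<in> S"
proof -
  have "Max S - (Min S - 1) \<in> S"
    using movable Min_pos unfolding smallest_movable_def by (intro mem_if_less_slope) linarith
  moreover have "Max S - (Min S - 1) = Max S + 1 - Min S"
    using Min_lt_Suc_Max_minus_Min Min_pos by arith
  ultimately show ?thesis by simp
qed

lemma Suc_Max_notin: "Max S + 1 \<notin> S"
  using mem_le_Max[of "Max S + 1"] by auto

lemma sum_move_smallest: "\<Sum>(move_smallest S) = \<Sum>S"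
proof -
  let ?R = "S - {Min S, Max S + 1 - Min S}"
  have "S = insert (Min S) (insert (Max S + 1 - Min S) ?R)"
    using Min_mem Suc_Max_minus_Min_mem by auto
  also have "\<Sum>\<dots> = Min S + (Max S + 1 - Min S) + \<Sum>?R"
    using finite_parts Min_lt_Suc_Max_minus_Min by simp
  finally have "\<Sum>S = Min S + (Max S + 1 - Min S) + \<Sum>?R" .
  then show ?thesis
    unfolding move_smallest_def using finite_parts Suc_Max_notin Min_lt_Suc_Max_minus_Min by simp
qed

lemma move_smallest_partition: "distinct_partition (move_smallest S)"
  using finite_parts zero_notin by unfold_locales (auto simp: move_smallest_def)

lemma move_smallest_ne: "move_smallest S \<noteq> S"
  using Suc_Max_notin by (auto simp: move_smallest_def)

lemma Max_move_smallest: "Max (move_smallest S) = Max S + 1"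
  using finite_parts mem_le_Max by (intro Max_eqI) (auto simp: move_smallest_def le_SucI)

lemma Min_less_move_smallest: "x \<in> move_smallest S \<Longrightarrow> Min S < x"
  using Min_le_mem Min_lt_Suc_Max_minus_Min by (force simp: move_smallest_def)

lemma slope_move_smallest: "slope (move_smallest S) = Min S"
proof -
  interpret T: distinct_partition "move_smallest S" by (rule move_smallest_partition)
  show ?thesis
  proof (rule T.slope_eqI, unfold Max_move_smallest)
    fix j assume "j < Min S"
    show "Max S + 1 - j \<in> move_smallest S"
    proof (cases "j = 0")
      case False
      have "Max S - (j - 1) \<in> S"
        using \<open>j < Min S\<close> movable unfolding smallest_movable_def by (intro mem_if_less_slope) linarith
      moreover have "Max S - (j - 1) = Max S + 1 - j"
        using False \<open>j < Min S\<close> Min_le_mem[OF Max_mem] by arith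
      ultimately show ?thesis
        using \<open>j < Min S\<close> Min_lt_Suc_Max_minus_Min by (auto simp: move_smallest_def)
    qed (simp add: move_smallest_def)
  qed (use Min_pos in \<open>simp add: move_smallest_def\<close>)
qed

lemma slope_movable_move_smallest: "slope_movable (move_smallest S)"
proof -
  interpret T: distinct_partition "move_smallest S" by (rule move_smallest_partition)
  have "Min S < Min (move_smallest S)" using T.Min_mem by (rule Min_less_move_smallest)
  then show ?thesis
    using Min_lt_Suc_Max_minus_Min unfolding slope_movable_def slope_move_smallest Max_move_smallest
    by linarith
qed

lemma move_slope_move_smallest: "move_slope (move_smallest S) = S"
  unfolding move_slope_def slope_move_smallest Max_move_smallest
  using Min_mem Suc_Max_minus_Min_mem Suc_Max_notin by (auto simp: move_smallest_def)

end

context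
  assumes movable: "slope_movable S"
begin

lemma slope_lt_Max_minus_slope: "slope S < Max S - slope S"
  using movable Min_le_mem[OF Suc_Max_minus_slope_mem] slope_le_Max unfolding slope_movable_def by arith

lemma slope_notin: "slope S \<notin> S"
  using movable Min_le_mem unfolding slope_movable_def by force

lemma sum_move_slope: "\<Sum>(move_slope S) = \<Sum>S"
proof -
  let ?R = "S - {Max S}"
  have "\<Sum>(move_slope S) = (Max S - slope S) + slope S + \<Sum>?R"
    unfolding move_slope_def using finite_parts Max_minus_slope_notin slope_notin slope_lt_Max_minus_slope by simp
  also have "\<dots> = Max S + \<Sum>?R" using slope_lt_Max_minus_slope by simp
  also have "\<dots> = \<Sum>S" using finite_parts Max_mem by (simp add: sum.remove)
  finally show ?thesis .
qed

lemma move_slope_partition: "distinct_partition (move_slope S)"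
  using finite_parts zero_notin slope_pos slope_lt_Max_minus_slope by unfold_locales (auto simp: move_slope_def)

lemma move_slope_ne: "move_slope S \<noteq> S"
  using slope_notin by (auto simp: move_slope_def)

lemma Max_move_slope: "Max (move_slope S) = Max S - 1"
proof (rule Max_eqI)
  show "Max S - 1 \<in> move_slope S"
  proof (cases "slope S = 1")
    case False
    then have "Max S - 1 \<in> S" using slope_pos by (intro mem_if_less_slope) simp
    moreover have "Max S - 1 \<noteq> Max S" using slope_lt_Max_minus_slope by arith
    ultimately show ?thesis by (simp add: move_slope_def)
  qed (simp add: move_slope_def)
  show "x \<le> Max S - 1" if "x \<in> move_slope S" for x
    using that mem_le_Max[of x] slope_lt_Max_minus_slope slope_pos by (auto simp: move_slope_def)
qed (simp add: move_slope_def finite_parts)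

lemma Min_move_slope: "Min (move_slope S) = slope S"
proof (rule Min_eqI)
  show "slope S \<le> x" if "x \<in> move_slope S" for x
    using that Min_le_mem movable slope_lt_Max_minus_slope unfolding slope_movable_def
    by (force simp: move_slope_def)
qed (simp_all add: move_slope_def finite_parts)

lemma slope_move_slope_ge: "slope S \<le> slope (move_slope S)"
proof -
  interpret T: distinct_partition "move_slope S" by (rule move_slope_partition)
  show ?thesis
  proof (rule T.slope_geI, unfold Max_move_slope)
    fix j assume "j < slope S"
    show "Max S - 1 - j \<in> move_slope S"
    proof (cases "j = slope S - 1")
      case False
      then have "Max S - (j + 1) \<in> S" using \<open>j < slope S\<close> by (intro mem_if_less_slope) simp
      then show ?thesis using \<open>j < slope S\<close> slope_lt_Max_minus_slope by (auto simp: move_slope_def)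
    qed (use slope_pos in \<open>simp add: move_slope_def\<close>)
  qed
qed

lemma smallest_movable_move_slope: "smallest_movable (move_slope S)"
  using slope_move_slope_ge slope_lt_Max_minus_slope
  unfolding smallest_movable_def Min_move_slope Max_move_slope by linarith

lemma move_smallest_move_slope: "move_smallest (move_slope S) = S"
proof -
  have "Max S - 1 + 1 = Max S" using slope_lt_Max_minus_slope by simp
  then show ?thesis
    unfolding move_smallest_def Min_move_slope Max_move_slope
    using Max_mem Max_minus_slope_notin slope_notin slope_lt_Max_minus_slope by (auto simp: move_slope_def)
qed

end

lemma interval_if_slope_covers: "Max S + 1 - Min S \<le> slope S \<Longrightarrow> S = {Min S..Max S}"
proof (intro equalityI subsetI)
  fix x assume "x \<in> {Min S..Max S}" and "Max S + 1 - Min S \<le> slope S"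
  then have "Max S - (Max S - x) \<in> S" by (intro mem_if_less_slope) auto
  then show "x \<in> S" using \<open>x \<in> {Min S..Max S}\<close> by simp
qed (simp add: Min_le_mem mem_le_Max)

lemma pentagonal_if_not_movable:
  assumes "\<not> smallest_movable S" and "\<not> slope_movable S"
  shows "\<exists>k. 24 * \<Sum>S + 1 = k\<^sup>2"
proof (cases "Min S \<le> slope S")
  case True
  then have "Min S = slope S" "Max S + 1 = 2 * slope S"
    using assms(1) unfolding smallest_movable_def by auto
  then have "S = {slope S..<2 * slope S}"
    using interval_if_slope_covers slope_pos by (simp add: atLeastLessThanSuc_atLeastAtMost[symmetric])
  then show ?thesis using pentagonal_sum_interval(1) slope_pos by metis
next
  case False
  then have "Min S = slope S + 1" "Max S = 2 * slope S"
    using assms(2) unfolding slope_movable_def by auto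
  then have "S = {slope S + 1..<2 * slope S + 1}"
    using interval_if_slope_covers by (simp add: atLeastLessThanSuc_atLeastAtMost[symmetric])
  then show ?thesis using pentagonal_sum_interval(2) by metis
qed

lemma franklin_cases:
  obtains "smallest_movable S" "franklin S = move_smallest S"
  | "slope_movable S" "franklin S = move_slope S"
  | "\<not> smallest_movable S" "\<not> slope_movable S" "franklin S = S"
  unfolding franklin_def using nonempty by metis

lemma franklin_partition: "distinct_partition (franklin S)"
  by (cases rule: franklin_cases) (simp_all add: move_smallest_partition move_slope_partition
      distinct_partition_axioms)

lemma sum_franklin: "\<Sum>(franklin S) = \<Sum>S"
  by (cases rule: franklin_cases) (simp_all add: sum_move_smallest sum_move_slope)

lemma franklin_franklin: "franklin (franklin S) = S"
proof (cases rule: franklin_cases)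
  case 1
  have "\<not> smallest_movable (move_smallest S)"
    using slope_movable_move_smallest[OF 1(1)] unfolding smallest_movable_def slope_movable_def by simp
  then show ?thesis
    using 1 slope_movable_move_smallest move_slope_move_smallest move_smallest_partition
    by (simp add: franklin_def distinct_partition.nonempty)
next
  case 2
  then show ?thesis
    using smallest_movable_move_slope move_smallest_move_slope move_slope_partition
    by (simp add: franklin_def distinct_partition.nonempty)
qed simp

lemma pentagonal_if_franklin_fixed:
  assumes "franklin S = S" shows "\<exists>k. 24 * \<Sum>S + 1 = k\<^sup>2"
proof (cases rule: franklin_cases)
  case 3
  then show ?thesis by (intro pentagonal_if_not_movable)
qed (use assms move_smallest_ne move_slope_ne in simp_all)

end

lemma franklin_distinct_partitions:
  assumes "S \<in> distinct_partitions N"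
  shows "franklin S \<in> distinct_partitions N" and "franklin (franklin S) = S"
    and "franklin S = S \<Longrightarrow> \<exists>k. 24 * N + 1 = k\<^sup>2"
proof -
  have S: "finite S" "0 \<notin> S" "\<Sum>S = N" using assms unfolding distinct_partitions_def by auto
  have "franklin S \<in> distinct_partitions N \<and> franklin (franklin S) = S
    \<and> (franklin S = S \<longrightarrow> (\<exists>k. 24 * N + 1 = k\<^sup>2))"
  proof (cases "S = {}")
    case True
    then show ?thesis using assms S by (auto simp: franklin_def intro: exI[of _ 1])
  next
    case False
    interpret distinct_partition S using S False by unfold_locales
    interpret F: distinct_partition "franklin S" by (rule franklin_partition)
    show ?thesis
      using S sum_franklin franklin_franklin pentagonal_if_franklin_fixed F.finite_parts F.zero_notin
      by (auto simp: distinct_partitions_def)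
  qed
  then show "franklin S \<in> distinct_partitions N" and "franklin (franklin S) = S"
    and "franklin S = S \<Longrightarrow> \<exists>k. 24 * N + 1 = k\<^sup>2" by auto
qed

lemma even_card_if_fixpoint_free_involution:
  assumes "finite A" and "\<And>x. x \<in> A \<Longrightarrow> f x \<in> A" and "\<And>x. x \<in> A \<Longrightarrow> f x \<noteq> x"
    and "\<And>x. x \<in> A \<Longrightarrow> f (f x) = x"
  shows "even (card A)"
proof -
  let ?orbits = "(\<lambda>x. {x, f x}) ` A"
  have "2 * card ?orbits = card (\<Union>?orbits)"
  proof (rule card_partition)
    show "finite (\<Union>?orbits)" using assms(1,2) by auto
    show "card c = 2" if "c \<in> ?orbits" for c using that assms(3) by fastforce
    show "c1 \<inter> c2 = {}" if "c1 \<in> ?orbits" "c2 \<in> ?orbits" "c1 \<noteq> c2" for c1 c2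
      using that assms(4) by (auto dest: arg_cong[of _ _ f])
  qed (use assms(1) in simp)
  moreover have "\<Union>?orbits = A" using assms(2) by auto
  ultimately show ?thesis by (metis dvd_triv_left)
qed

lemma finite_distinct_partitions: "finite (distinct_partitions N)"
proof (rule finite_subset)
  show "distinct_partitions N \<subseteq> Pow {..N}"
    unfolding distinct_partitions_def using member_le_sum[of _ _ id] by fastforce
qed simp

lemma b2_eq_card_distinct_partitions: "b 2 N = card (distinct_partitions N)"
proof -
  have "b 2 N = card (odd_partitions N)" unfolding b_def odd_partitions_def by simp
  also have "\<dots> = card (distinct_partitions N)"
    using bij_betw_same_card[OF bij_betw_glaisher_split] by simp
  finally show ?thesis .
qed

lemma even_b2_if_not_pentagonal:
  assumes "\<nexists>k. 24 * N + 1 = k\<^sup>2"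
  shows "even (b 2 N)"
  unfolding b2_eq_card_distinct_partitions
  using finite_distinct_partitions franklin_distinct_partitions assms
  by (intro even_card_if_fixpoint_free_involution[where f = franklin]) blast+

section \<open>The index of the congruence\<close>

lemma square_mod_24_eq_one:
  fixes r :: nat
  assumes "odd r" and "\<not> 3 dvd r"
  shows "r\<^sup>2 mod 24 = 1"
proof -
  have "r mod 24 \<in> {..<24}" "odd (r mod 24)" "\<not> 3 dvd (r mod 24)"
    using assms by (simp_all add: dvd_mod_iff)
  then have "(r mod 24)\<^sup>2 mod 24 = 1" by (auto simp: lessThan_nat_numeral lessThan_Suc)
  then show ?thesis by (simp add: power_mod)
qed

lemma prime_square_cong_one_mod_24:
  assumes "prime p" and "p \<ge> 5"
  shows "[int p ^ 2 = 1] (mod 24)"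
proof -
  have "odd p" using assms by (intro prime_odd_nat) auto
  moreover have "\<not> 3 dvd p"
  proof
    assume "3 dvd p"
    then have "3 = p" using assms(1) by (auto simp: prime_nat_iff)
    then show False using assms(2) by simp
  qed
  ultimately have "[p ^ 2 = 1] (mod 24)" by (simp add: cong_def square_mod_24_eq_one)
  then show ?thesis by (metis cong_int_iff of_nat_1 of_nat_power of_nat_numeral)
qed

lemma square_if_square_times_square:
  fixes d x k :: int
  assumes "d ^ 2 * x = k ^ 2" and "d \<noteq> 0"
  shows "\<exists>c. x = c ^ 2"
proof -
  have "d ^ 2 dvd k ^ 2" using assms(1) by (metis dvd_triv_left)
  then obtain c where "k = d * c" by auto
  then show ?thesis using assms by (auto simp: power_mult_distrib)
qed

lemma not_square_if_Legendre_minus_one: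
  assumes "Legendre a m = -1" and "[x = a] (mod m)"
  shows "\<nexists>c. x = c ^ 2"
proof
  assume "\<exists>c. x = c ^ 2"
  then have "QuadRes m a" using assms(2) unfolding QuadRes_def by auto
  then show False using assms(1) unfolding Legendre_def by (auto split: if_splits)
qed

lemma index_times_24_plus_one:
  fixes p n j :: int and a :: nat
  assumes "[p ^ 2 = 1] (mod 24)"
  shows "24 * (p ^ (2 * a + 1) * n + ((24 * j + 1) * p ^ (2 * a) - 1) div 24) + 1
    = (p ^ a)\<^sup>2 * (24 * p * n + 24 * j + 1)"
proof -
  have "[p ^ (2 * a) = 1] (mod 24)" using cong_pow[OF assms, of a] by (simp add: power_mult)
  then have "[(24 * j + 1) * p ^ (2 * a) = (24 * j + 1) * 1] (mod 24)" by (rule cong_scalar_left)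
  also have "[(24 * j + 1) * 1 = 1] (mod 24)" by (simp add: cong_def)
  finally have "[(24 * j + 1) * p ^ (2 * a) = 1] (mod 24)" .
  then have "24 dvd (24 * j + 1) * p ^ (2 * a) - 1" by (simp add: cong_iff_dvd_diff)
  then have "24 * (((24 * j + 1) * p ^ (2 * a) - 1) div 24) = (24 * j + 1) * p ^ (2 * a) - 1"
    by simp
  then show ?thesis by (simp add: algebra_simps power_mult power2_eq_square flip: power_mult_distrib)
qed

theorem theorem3p3:
  fixes p :: nat and \<alpha> n :: nat and j :: int
  assumes "prime p" and "p \<ge> 5"
    and "0 \<le> j" and "j \<le> int p - 1"
    and "Legendre (24 * j + 1) (int p) = -1"
  shows "even (b 2 (nat (int p ^ (2 * \<alpha> + 1) * int n + ((24 * j + 1) * int p ^ (2 * \<alpha>) - 1) div 24)))"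
proof (rule even_b2_if_not_pentagonal)
  define E where "E = int p ^ (2 * \<alpha> + 1) * int n + ((24 * j + 1) * int p ^ (2 * \<alpha>) - 1) div 24"
  define X where "X = 24 * int p * int n + 24 * j + 1"
  have E: "24 * E + 1 = (int p ^ \<alpha>)\<^sup>2 * X"
    unfolding E_def X_def using prime_square_cong_one_mod_24[OF assms(1,2)] by (rule index_times_24_plus_one)
  have "0 < X" "0 < int p" using assms(2,3) unfolding X_def by auto
  then have "0 < (int p ^ \<alpha>)\<^sup>2 * X" by simp
  then have "0 \<le> E" using E by linarith
  show "\<nexists>k. 24 * nat E + 1 = k\<^sup>2"
  proof
    assume "\<exists>k. 24 * nat E + 1 = k\<^sup>2"
    then obtain k where "24 * nat E + 1 = k\<^sup>2" by blast
    then have "int (24 * nat E + 1) = int (k\<^sup>2)" by simp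
    then have "(int p ^ \<alpha>)\<^sup>2 * X = (int k)\<^sup>2" using E \<open>0 \<le> E\<close> by simp
    then have "\<exists>c. X = c\<^sup>2" using \<open>0 < int p\<close> by (intro square_if_square_times_square) auto
    moreover have "[X = 24 * j + 1] (mod int p)" unfolding X_def by (simp add: cong_iff_dvd_diff)
    ultimately show False using not_square_if_Legendre_minus_one[OF assms(5)] by blast
  qed
qed

end
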